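(* For the direct referral reward scheme on the chain defined in the context, for every $i\le h-1$, $$r(i,1)\le nhP_h+1\quad\text{and}\quad r(i,0)\le nh^2P_h+h.$$
   Context: Chain with agents at positions $1,2,\dots$, each independently holding an answer with probability $p=1/n$; $h\ge1$. $r(i,s)$ is the reward to the agent at position $i$ when the first answer is at position $i+s\le h$. Let $P_i=\sum_{j=1}^i p(1-p)^{j-1}$ and $R_i=\sum_{s=1}^{h-i} r(i,s)p(1-p)^{s-1}$ (so $R_h=0$). The scheme is defined backwards by: $r(i,1)=nR_{i+1}+P_{h-i-1}$ for $i\le h-1$; $r(i,0)=\sum_{t=i}^{h-1}r(t,1)+1$ for $1\le i\le h$; $r(i,s)=1$ if $i+s\le h$ and $s>1$; $r(i,s)=0$ otherwise. *)

theory Defs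
  imports Complex_Main
begin

text \<open>Success probability p = 1/n of each agent independently holding an answer.\<close>
definition prob :: "nat \<Rightarrow> real" where
  "prob n = 1 / real n"

definition Pcum :: "nat \<Rightarrow> nat \<Rightarrow> real" where
  "Pcum n i = (\<Sum>j=1..i. prob n * (1 - prob n) ^ (j - 1))"

function rew :: "nat \<Rightarrow> nat \<Rightarrow> nat \<Rightarrow> nat \<Rightarrow> real" where
  "rew n h i s =
    (if s = 1 \<and> i + 1 \<le> h then
       real n * (\<Sum>s'=1..h-(i+1). rew n h (i+1) s' * prob n * (1 - prob n) ^ (s' - 1))
       + Pcum n (h - i - 1)
     else if s = 0 \<and> i \<le> h then (\<Sum>t=i..h-1. rew n h t 1) + 1
     else if 1 < s \<and> i + s \<le> h then 1
     else 0)"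
  by pat_completeness auto
termination
  by (relation "measure (\<lambda>(n,h,i,s). 2 * (h - i) + (if s = 0 then 1 else 0))") auto

declare rew.simps [simp del]

definition Rexp :: "nat \<Rightarrow> nat \<Rightarrow> nat \<Rightarrow> real" where
  "Rexp n h i = (\<Sum>s=1..h-i. rew n h i s * prob n * (1 - prob n) ^ (s - 1))"

lemma rew_1: "i \<le> h - 1 \<Longrightarrow> 1 \<le> h \<Longrightarrow>
  rew n h i 1 = real n * Rexp n h (i+1) + Pcum n (h - i - 1)"
  by (subst rew.simps) (auto simp add: Rexp_def)

end

theory Submission
  imports Defs
begin

text \<open>Apart from the last agent, each step back along the chain raises the referral reward by
  (n+1) P_{h-t-1} - 1 \<le> n P_h: the reward r(t,1) is n times the expected reward R_{t+1}, whose
  terms for s > 1 are all 1 and together give P_{h-t-1} - p, while n p = 1 turns the s = 1 term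
  into r(t+1,1) itself. Since r(h-1,1) = 0, summing the increments gives
  r(i,1) \<le> (h-1-i) n P_h, and r(i,0) is a sum of at most h such rewards plus 1.\<close>

lemma prob_nonneg: "0 \<le> prob n"
  by (simp add: prob_def)

lemma prob_le_one: "prob n \<le> 1"
  by (cases n) (simp_all add: prob_def)

lemma Pcum_eq: "Pcum n m = 1 - (1 - prob n) ^ m"
proof (induction m)
  case 0
  then show ?case by (simp add: Pcum_def)
next
  case (Suc m)
  have "Pcum n (Suc m) = Pcum n m + prob n * (1 - prob n) ^ m"
    by (simp add: Pcum_def)
  with Suc show ?case by (simp add: algebra_simps)
qed

lemma Pcum_nonneg: "0 \<le> Pcum n m"
  using prob_nonneg prob_le_one by (simp add: Pcum_eq power_le_one)

lemma Pcum_le_one: "Pcum n m \<le> 1"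
  using prob_le_one by (simp add: Pcum_eq)

lemma Pcum_mono: "m \<le> k \<Longrightarrow> Pcum n m \<le> Pcum n k"
  using prob_nonneg prob_le_one by (simp add: Pcum_eq power_decreasing)

lemma Pcum_eq_prob_plus: "1 \<le> m \<Longrightarrow>
    Pcum n m = prob n + (\<Sum>s=2..m. prob n * (1 - prob n) ^ (s - 1))"
  unfolding Pcum_def by (subst sum.atLeast_Suc_atMost) (auto simp: numeral_2_eq_2)

lemma rew_gt_one: "1 < s \<Longrightarrow> i + s \<le> h \<Longrightarrow> rew n h i s = 1"
  by (subst rew.simps) auto

lemma rew_0: "i \<le> h \<Longrightarrow> rew n h i 0 = (\<Sum>t=i..h-1. rew n h t 1) + 1"
  by (subst rew.simps) auto

lemma rew_last: "1 \<le> h \<Longrightarrow> rew n h (h - 1) 1 = 0"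
  using rew_1[of "h - 1" h n] by (simp add: Rexp_def Pcum_def)

lemma Rexp_eq: assumes "i < h"
  shows "Rexp n h i = rew n h i 1 * prob n + (Pcum n (h - i) - prob n)"
proof -
  have "Rexp n h i = rew n h i 1 * prob n
        + (\<Sum>s=2..h-i. rew n h i s * prob n * (1 - prob n) ^ (s - 1))"
    unfolding Rexp_def using assms
    by (subst sum.atLeast_Suc_atMost) (auto simp: numeral_2_eq_2)
  also have "(\<Sum>s=2..h-i. rew n h i s * prob n * (1 - prob n) ^ (s - 1))
           = (\<Sum>s=2..h-i. prob n * (1 - prob n) ^ (s - 1))"
    by (rule sum.cong) (auto simp: rew_gt_one)
  also have "\<dots> = Pcum n (h - i) - prob n"
    using assms Pcum_eq_prob_plus[of "h - i" n] by simp
  finally show ?thesis .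
qed

lemma rew_1_recurrence:
  assumes "1 \<le> n" and "t + 1 < h"
  shows "rew n h t 1 = rew n h (t + 1) 1 + (real n + 1) * Pcum n (h - t - 1) - 1"
proof -
  have np: "real n * prob n = 1"
    using assms(1) by (simp add: prob_def)
  have R: "Rexp n h (t + 1) = rew n h (t + 1) 1 * prob n + (Pcum n (h - t - 1) - prob n)"
    using Rexp_eq[of "t + 1" h n] assms(2) by simp
  have "real n * Rexp n h (t + 1)
        = rew n h (t + 1) 1 * (real n * prob n) + real n * Pcum n (h - t - 1) - real n * prob n"
    unfolding R by (simp add: algebra_simps)
  then show ?thesis
    using assms rew_1[of t h n] np by (simp add: algebra_simps)
qed

lemma rew_1_step:
  assumes "1 \<le> n" and "t + 1 < h"
  shows "rew n h t 1 \<le> rew n h (t + 1) 1 + real n * Pcum n h"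
proof -
  have "Pcum n (h - t - 1) \<le> 1" and "real n * Pcum n (h - t - 1) \<le> real n * Pcum n h"
    by (simp_all add: Pcum_le_one Pcum_mono mult_left_mono)
  then show ?thesis
    using rew_1_recurrence[OF assms] by (simp add: algebra_simps)
qed

lemma rew_1_le:
  assumes "1 \<le> n" and "1 \<le> h" and "t \<le> h - 1"
  shows "rew n h t 1 \<le> real (h - 1 - t) * real n * Pcum n h"
  using assms(3)
proof (induction t rule: inc_induct)
  case base
  show ?case using rew_last[OF assms(2)] by simp
next
  case (step t)
  then have "rew n h t 1 \<le> rew n h (t + 1) 1 + real n * Pcum n h"
    by (intro rew_1_step[OF assms(1)]) simp
  also have "\<dots> \<le> real (h - 1 - t) * real n * Pcum n h"
    using step.IH step.hyps(2) by (simp add: of_nat_diff algebra_simps)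
  finally show ?case .
qed

lemma rew_1_le_horizon:
  assumes "1 \<le> n" and "1 \<le> h" and "t \<le> h - 1"
  shows "rew n h t 1 \<le> real n * real h * Pcum n h"
proof -
  have "real (h - 1 - t) * (real n * Pcum n h) \<le> real h * (real n * Pcum n h)"
    by (rule mult_right_mono) (simp_all add: Pcum_nonneg)
  then show ?thesis
    using rew_1_le[OF assms] by (simp add: algebra_simps)
qed

theorem proposition4p2:
  fixes n h i :: nat
  assumes "n \<ge> 1" and "h \<ge> 1" and "1 \<le> i" and "i \<le> h - 1"
  shows "rew n h i 1 \<le> real n * real h * Pcum n h + 1
       \<and> rew n h i 0 \<le> real n * (real h)^2 * Pcum n h + real h"
proof
  let ?B = "real n * real h * Pcum n h"
  show "rew n h i 1 \<le> ?B + 1"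
    using rew_1_le_horizon[OF assms(1,2,4)] by simp
  have "(\<Sum>t=i..h-1. rew n h t 1) \<le> (\<Sum>t=i..h-1. ?B)"
    by (rule sum_mono) (use rew_1_le_horizon[OF assms(1,2)] in auto)
  also have "\<dots> = real (h - i) * ?B"
    using assms by simp
  also have "\<dots> \<le> real h * ?B"
    by (rule mult_right_mono) (simp_all add: Pcum_nonneg)
  finally have "rew n h i 0 \<le> real h * ?B + 1"
    using rew_0[of i h n] assms by simp
  then show "rew n h i 0 \<le> real n * (real h)^2 * Pcum n h + real h"
    using assms by (simp add: power2_eq_square algebra_simps)
qed

end
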